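(* Let $S=\langle T,\Pi,C\rangle$ be a state space and let $(A_i,\psi_i)$, $1\le i\le k$, be abstractions of $S$ forming an additive abstraction system, and let $t,g\in T$. If $h_{add}(t,g)<C^*_j(t_j,g_j)+R^*_j(t_j,g_j)$ for some $j\in\{1,\dots,k\}$, then $h_{add}(t,g)\ne OPT(t,g)$.
   Context: A state space is a weighted directed graph $S=\langle T,\Pi,C\rangle$ where $T$ is a finite set of states, $\Pi\subseteq T\times T$ is a set of directed edges, and $C:\Pi\to\mathbb{N}=\{0,1,2,\dots\}$. A path from $u$ to $v$ is a sequence of edges $\langle\pi^1,\dots,\pi^n\rangle$ with $\pi^j=(u^{j-1},u^j)\in\Pi$, $u^0=u$, $u^n=v$; its cost is $C(\pi)=\sum_j C(\pi^j)$. $OPT(u,v)$ is the minimum cost of a path from $u$ to $v$ in $S$ (minima over empty sets are $+\infty$). An abstract state space is $A_i=\langle T_i,\Pi_i,C_i,R_i\rangle$ with $T_i$ a set of abstract states, $\Pi_i\subseteq T_i\times T_i$, and edge weights $C_i,R_i:\Pi_i\to\mathbb{N}$ (primary and residual cost), extended additively to paths. An abstraction of $S$ is a pair $(A_i,\psi_i)$ with $\psi_i:T\to T_i$ such that (1) for every $(u,v)\in\Pi$, $(\psi_i(u),\psi_i(v))\in\Pi_i$, and (2) for every $\pi=(u,v)\in\Pi$, $C_i(\pi_i)+R_i(\pi_i)\le C(\pi)$ where $\pi_i=(\psi_i(u),\psi_i(v))$. The system is additive if for every $\pi\in\Pi$, $\sum_{i=1}^k C_i(\pi_i)\le C(\pi)$.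 Write $t_i=\psi_i(t)$. Define $C^*_i(x,y)=\min\{C_i(\rho):\rho\text{ a path from }x\text{ to }y\text{ in }A_i\}$, $h_{add}(t,g)=\sum_{i=1}^k C^*_i(t_i,g_i)$; $P_i(x,y)$ is the set of paths $\rho$ from $x$ to $y$ in $A_i$ with $C_i(\rho)=C^*_i(x,y)$, and $R^*_i(x,y)=\min_{\rho\in P_i(x,y)}R_i(\rho)$. *)

theory Defs
  imports Main "HOL-Library.Extended_Nat"
begin

definition is_path :: "('v \<times> 'v) set \<Rightarrow> 'v \<Rightarrow> 'v \<Rightarrow> ('v \<times> 'v) list \<Rightarrow> bool" where
  "is_path E u v es \<longleftrightarrow>
     set es \<subseteq> E \<and>
     (es = [] \<longrightarrow> u = v) \<and>
     (es \<noteq> [] \<longrightarrow> fst (hd es) = u \<and> snd (last es) = v \<and>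
        (\<forall>i. Suc i < length es \<longrightarrow> snd (es ! i) = fst (es ! Suc i)))"

definition path_cost :: "('v \<times> 'v \<Rightarrow> nat) \<Rightarrow> ('v \<times> 'v) list \<Rightarrow> nat" where
  "path_cost c es = sum_list (map c es)"

definition state_space :: "'s set \<Rightarrow> ('s \<times> 's) set \<Rightarrow> bool" where
  "state_space T Pi \<longleftrightarrow> finite T \<and> Pi \<subseteq> T \<times> T"

text \<open>OPT(u,v): minimum path cost, +\<infinity> if no path.\<close>
definition OPT :: "('s \<times> 's) set \<Rightarrow> ('s \<times> 's \<Rightarrow> nat) \<Rightarrow> 's \<Rightarrow> 's \<Rightarrow> enat" where
  "OPT Pi C u v = Inf {enat (path_cost C es) | es. is_path Pi u v es}"

definition abstraction ::
  "'s set \<Rightarrow> ('s \<times> 's) set \<Rightarrow> ('s \<times> 's \<Rightarrow> nat) \<Rightarrow>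
   'a set \<Rightarrow> ('a \<times> 'a) set \<Rightarrow> ('a \<times> 'a \<Rightarrow> nat) \<Rightarrow> ('a \<times> 'a \<Rightarrow> nat) \<Rightarrow> ('s \<Rightarrow> 'a) \<Rightarrow> bool" where
  "abstraction T Pi C Ta Pa Ca Ra psi \<longleftrightarrow>
     Pa \<subseteq> Ta \<times> Ta \<and>
     (\<forall>t\<in>T. psi t \<in> Ta) \<and>
     (\<forall>(u,v)\<in>Pi. (psi u, psi v) \<in> Pa) \<and>
     (\<forall>(u,v)\<in>Pi. Ca (psi u, psi v) + Ra (psi u, psi v) \<le> C (u,v))"

definition additive ::
  "nat \<Rightarrow> ('s \<times> 's) set \<Rightarrow> ('s \<times> 's \<Rightarrow> nat) \<Rightarrow> (nat \<Rightarrow> 'a \<times> 'a \<Rightarrow> nat) \<Rightarrow> (nat \<Rightarrow> 's \<Rightarrow> 'a) \<Rightarrow> bool" where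
  "additive k Pi C Ca psi \<longleftrightarrow>
     (\<forall>(u,v)\<in>Pi. (\<Sum>i=1..k. Ca i (psi i u, psi i v)) \<le> C (u,v))"

definition Cstar :: "('a \<times> 'a) set \<Rightarrow> ('a \<times> 'a \<Rightarrow> nat) \<Rightarrow> 'a \<Rightarrow> 'a \<Rightarrow> enat" where
  "Cstar Pa Ca x y = Inf {enat (path_cost Ca es) | es. is_path Pa x y es}"

definition Popt :: "('a \<times> 'a) set \<Rightarrow> ('a \<times> 'a \<Rightarrow> nat) \<Rightarrow> 'a \<Rightarrow> 'a \<Rightarrow> ('a \<times> 'a) list set" where
  "Popt Pa Ca x y = {es. is_path Pa x y es \<and> enat (path_cost Ca es) = Cstar Pa Ca x y}"

definition Rstar :: "('a \<times> 'a) set \<Rightarrow> ('a \<times> 'a \<Rightarrow> nat) \<Rightarrow> ('a \<times> 'a \<Rightarrow> nat) \<Rightarrow> 'a \<Rightarrow> 'a \<Rightarrow> enat" where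
  "Rstar Pa Ca Ra x y = Inf {enat (path_cost Ra es) | es. es \<in> Popt Pa Ca x y}"

definition h_add :: "nat \<Rightarrow> (nat \<Rightarrow> ('a \<times> 'a) set) \<Rightarrow> (nat \<Rightarrow> 'a \<times> 'a \<Rightarrow> nat) \<Rightarrow> (nat \<Rightarrow> 's \<Rightarrow> 'a) \<Rightarrow> 's \<Rightarrow> 's \<Rightarrow> enat" where
  "h_add k Pa Ca psi t g = (\<Sum>i=1..k. Cstar (Pa i) (Ca i) (psi i t) (psi i g))"

end

theory Submission
  imports Defs
begin

text \<open>If h_add(t,g) = OPT(t,g), project an optimal concrete path to every abstraction.
  Each projection costs at least C*_i, and by additivity the projected costs sum to at
  most OPT(t,g) = \<Sum>i C*_i; hence every projection is primary-optimal. The j-th one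
  therefore witnesses C*_j + R*_j \<le> C_j + R_j \<le> OPT(t,g) = h_add(t,g).\<close>

definition map_edges :: "('s \<Rightarrow> 'a) \<Rightarrow> ('s \<times> 's) list \<Rightarrow> ('a \<times> 'a) list" where
  "map_edges f es = map (\<lambda>(x, y). (f x, f y)) es"

lemma is_path_map_edges:
  assumes "is_path E u v es" and "\<forall>(x, y)\<in>E. (f x, f y) \<in> E'"
  shows "is_path E' (f u) (f v) (map_edges f es)"
  using assms unfolding is_path_def map_edges_def
  by (cases "es = []") (auto simp: hd_map last_map split: prod.splits)

lemma path_cost_map_edges_sum_le:
  assumes "set es \<subseteq> E" and "\<forall>(u, v)\<in>E. (\<Sum>i\<in>I. c i (f i u, f i v)) \<le> C (u, v)"
  shows "(\<Sum>i\<in>I. path_cost (c i) (map_edges (f i) es)) \<le> path_cost C es"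
  using assms(1)
proof (induction es)
  case Nil
  then show ?case by (simp add: path_cost_def map_edges_def)
next
  case (Cons e es)
  obtain u v where e: "e = (u, v)" by force
  have "(\<Sum>i\<in>I. path_cost (c i) (map_edges (f i) (e # es)))
      = (\<Sum>i\<in>I. c i (f i u, f i v)) + (\<Sum>i\<in>I. path_cost (c i) (map_edges (f i) es))"
    by (simp add: path_cost_def map_edges_def e sum.distrib)
  also have "\<dots> \<le> C (u, v) + path_cost C es"
    using Cons assms(2) e by (intro add_mono) auto
  finally show ?case by (simp add: path_cost_def e)
qed

lemma path_cost_map_edges_add_le:
  assumes "set es \<subseteq> E" and "\<forall>(u, v)\<in>E. c (f u, f v) + r (f u, f v) \<le> C (u, v)"
  shows "path_cost c (map_edges f es) + path_cost r (map_edges f es) \<le> path_cost C es"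
  using assms(1)
proof (induction es)
  case Nil
  then show ?case by (simp add: path_cost_def map_edges_def)
next
  case (Cons e es)
  obtain u v where e: "e = (u, v)" by force
  have "c (f u, f v) + r (f u, f v) \<le> C (u, v)" using Cons assms(2) e by auto
  with Cons show ?case by (simp add: path_cost_def map_edges_def e)
qed

lemma OPT_attained:
  assumes "OPT Pi C u v \<noteq> \<infinity>"
  obtains es where "is_path Pi u v es" and "OPT Pi C u v = enat (path_cost C es)"
proof -
  let ?S = "{enat (path_cost C es) | es. is_path Pi u v es}"
  have "?S \<noteq> {}" using assms unfolding OPT_def by (metis Inf_empty top_enat_def)
  then obtain x where "x \<in> ?S" by blast
  then have "OPT Pi C u v \<in> ?S" unfolding OPT_def by (rule wellorder_InfI)
  then show ?thesis using that by auto
qed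

lemma Cstar_le_path_cost:
  "is_path Pa x y es \<Longrightarrow> Cstar Pa Ca x y \<le> enat (path_cost Ca es)"
  unfolding Cstar_def by (intro Inf_lower) auto

lemma Rstar_le_path_cost:
  "es \<in> Popt Pa Ca x y \<Longrightarrow> Rstar Pa Ca Ra x y \<le> enat (path_cost Ra es)"
  unfolding Rstar_def by (intro Inf_lower) auto

lemma h_add_eq_path_cost_imp_Popt:
  assumes abs: "\<forall>i\<in>{1..k}. abstraction T Pi C (Ta i) (Pa i) (Ca i) (Ra i) (psi i)"
    and add: "additive k Pi C Ca psi"
    and es: "is_path Pi t g es"
    and eq: "h_add k Pa Ca psi t g = enat (path_cost C es)"
    and j: "j \<in> {1..k}"
  shows "map_edges (psi j) es \<in> Popt (Pa j) (Ca j) (psi j t) (psi j g)"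
proof -
  define a where "a i = path_cost (Ca i) (map_edges (psi i) es)" for i
  have path: "is_path (Pa i) (psi i t) (psi i g) (map_edges (psi i) es)" if "i \<in> {1..k}" for i
    using that abs es by (intro is_path_map_edges) (auto simp: abstraction_def)
  have Cstar_le: "Cstar (Pa i) (Ca i) (psi i t) (psi i g) \<le> enat (a i)" if "i \<in> {1..k}" for i
    unfolding a_def using path[OF that] by (rule Cstar_le_path_cost)
  define c where "c i = the_enat (Cstar (Pa i) (Ca i) (psi i t) (psi i g))" for i
  have Cstar_eq: "Cstar (Pa i) (Ca i) (psi i t) (psi i g) = enat (c i)" if "i \<in> {1..k}" for i
    using enat_ile[OF Cstar_le[OF that]] unfolding c_def by auto
  have c_le_a: "c i \<le> a i" if "i \<in> {1..k}" for i
    using Cstar_le[OF that] Cstar_eq[OF that] by simp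
  have "h_add k Pa Ca psi t g = (\<Sum>i=1..k. of_nat (c i))"
    unfolding h_add_def by (rule sum.cong) (simp_all add: Cstar_eq of_nat_eq_enat)
  also have "\<dots> = of_nat (\<Sum>i=1..k. c i)" by (rule of_nat_sum[symmetric])
  finally have "(\<Sum>i=1..k. c i) = path_cost C es" using eq by (simp add: of_nat_eq_enat)
  moreover have "(\<Sum>i=1..k. a i) \<le> path_cost C es"
    unfolding a_def using es add
    by (intro path_cost_map_edges_sum_le[where E = Pi]) (auto simp: is_path_def additive_def)
  moreover have "(\<Sum>i=1..k. c i) \<le> (\<Sum>i=1..k. a i)" using c_le_a by (rule sum_mono)
  ultimately have "(\<Sum>i=1..k. c i) = (\<Sum>i=1..k. a i)" by linarith
  then have "c j = a j" using c_le_a j finite_atLeastAtMost by (rule sum_mono_inv)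
  then show ?thesis
    unfolding Popt_def using path[OF j] Cstar_eq[OF j] by (simp add: a_def)
qed

theorem lemma10:
  fixes T :: "'s set" and Pi :: "('s \<times> 's) set" and C :: "'s \<times> 's \<Rightarrow> nat"
    and k :: nat
    and Ta :: "nat \<Rightarrow> 'a set" and Pa :: "nat \<Rightarrow> ('a \<times> 'a) set"
    and Ca Ra :: "nat \<Rightarrow> 'a \<times> 'a \<Rightarrow> nat" and psi :: "nat \<Rightarrow> 's \<Rightarrow> 'a"
    and t g :: 's and j :: nat
  assumes "state_space T Pi"
    and "\<forall>i\<in>{1..k}. abstraction T Pi C (Ta i) (Pa i) (Ca i) (Ra i) (psi i)"
    and "additive k Pi C Ca psi"
    and "t \<in> T" and "g \<in> T"
    and "j \<in> {1..k}"
    and "h_add k Pa Ca psi t g < Cstar (Pa j) (Ca j) (psi j t) (psi j g) + Rstar (Pa j) (Ca j) (Ra j) (psi j t) (psi j g)"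
  shows "h_add k Pa Ca psi t g \<noteq> OPT Pi C t g"
proof
  assume eq: "h_add k Pa Ca psi t g = OPT Pi C t g"
  have "OPT Pi C t g \<noteq> \<infinity>" using eq assms(7) by (metis enat_ord_simps(6) not_infinity_eq)
  then obtain es where es: "is_path Pi t g es" and opt: "OPT Pi C t g = enat (path_cost C es)"
    by (rule OPT_attained)
  let ?p = "map_edges (psi j) es"
  have Popt: "?p \<in> Popt (Pa j) (Ca j) (psi j t) (psi j g)"
    using assms(2,3,6) es eq opt by (intro h_add_eq_path_cost_imp_Popt) auto
  have "Cstar (Pa j) (Ca j) (psi j t) (psi j g) + Rstar (Pa j) (Ca j) (Ra j) (psi j t) (psi j g)
      \<le> enat (path_cost (Ca j) ?p) + enat (path_cost (Ra j) ?p)"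
    using Popt Rstar_le_path_cost[OF Popt] unfolding Popt_def by (auto intro: add_mono)
  also have "\<dots> \<le> enat (path_cost C es)"
    using es assms(2,6)
    by (simp, intro path_cost_map_edges_add_le[where E = Pi]) (auto simp: is_path_def abstraction_def)
  also have "\<dots> = h_add k Pa Ca psi t g" using eq opt by simp
  finally show False using assms(7) by simp
qed

end
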